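(* Let $\mathbf b=(b_1,\dots,b_{k-1})$ be a sequence of non-negative integers with $|\mathbf b|=\binom k2$. The following are equivalent: (i) $\mathbf b$ is a perfect matching sequence; (ii) the coefficient of $v^{\mathbf b}=v_1^{b_1}\cdots v_{k-1}^{b_{k-1}}$ in the polynomial $V(\lambda)=\prod_{1\le i<j\le k}(\lambda_j-\lambda_i)$, where $\lambda_i:=v_i+v_{i+1}+\dots+v_{k-1}$ for $1\le i\le k$ (so $\lambda_k=0$), is non-zero; (iii) $\sum_{j=s}^t b_j\ge\binom{t-s+2}{2}$ for every $1\le s\le t\le k-1$.
   Context: Fix an integer $k\ge 2$. For a sequence $\mathbf b=(b_1,\dots,b_{k-1})$ of non-negative integers write $|\mathbf b|=\sum_i b_i$. The bipartite graph $\mathcal B_{\mathbf b}$ has upper vertex class $U=\{(j,l):1\le j\le l\le k-1\}$ and lower vertex class $D_{\mathbf b}=\{(i,t):1\le i\le k-1,\ 1\le t\le b_i\}$, with an edge between $(j,l)\in U$ and $(i,t)\in D_{\mathbf b}$ if and only if $j\le i\le l$. The sequence $\mathbf b$ is a matching sequence if $\mathcal B_{\mathbf b}$ has a matching covering all of $D_{\mathbf b}$, and a perfect matching sequence if moreover $|\mathbf b|=\binom k2$. The $v_i$ are independent variables. *)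

theory Defs
  imports Main "HOL-Library.Poly_Mapping"
begin

text \<open>Sequences b = (b_1,...,b_{k-1}) are represented as functions nat => nat;
  only the values b 1, ..., b (k-1) are ever used.\<close>

definition bsize :: "nat \<Rightarrow> (nat \<Rightarrow> nat) \<Rightarrow> nat" where
  "bsize k b = (\<Sum>i=1..k-1. b i)"

definition upperV :: "nat \<Rightarrow> (nat \<times> nat) set" where
  "upperV k = {(j,l). 1 \<le> j \<and> j \<le> l \<and> l \<le> k-1}"

definition lowerV :: "nat \<Rightarrow> (nat \<Rightarrow> nat) \<Rightarrow> (nat \<times> nat) set" where
  "lowerV k b = {(i,t). 1 \<le> i \<and> i \<le> k-1 \<and> 1 \<le> t \<and> t \<le> b i}"

definition edgesB :: "nat \<Rightarrow> (nat \<Rightarrow> nat) \<Rightarrow> ((nat \<times> nat) \<times> (nat \<times> nat)) set" where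
  "edgesB k b = {((j,l),(i,t)). (j,l) \<in> upperV k \<and> (i,t) \<in> lowerV k b \<and> j \<le> i \<and> i \<le> l}"

definition is_matchingB :: "nat \<Rightarrow> (nat \<Rightarrow> nat) \<Rightarrow> ((nat \<times> nat) \<times> (nat \<times> nat)) set \<Rightarrow> bool" where
  "is_matchingB k b M \<longleftrightarrow> M \<subseteq> edgesB k b \<and>
     (\<forall>e\<in>M. \<forall>e'\<in>M. e \<noteq> e' \<longrightarrow> fst e \<noteq> fst e' \<and> snd e \<noteq> snd e')"

definition matching_sequence :: "nat \<Rightarrow> (nat \<Rightarrow> nat) \<Rightarrow> bool" where
  "matching_sequence k b \<longleftrightarrow>
     (\<exists>M. is_matchingB k b M \<and> (\<forall>d\<in>lowerV k b. \<exists>u. (u,d) \<in> M))"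

definition perfect_matching_sequence :: "nat \<Rightarrow> (nat \<Rightarrow> nat) \<Rightarrow> bool" where
  "perfect_matching_sequence k b \<longleftrightarrow> matching_sequence k b \<and> bsize k b = k choose 2"

type_synonym mpoly_int = "(nat \<Rightarrow>\<^sub>0 nat) \<Rightarrow>\<^sub>0 int"

definition var :: "nat \<Rightarrow> mpoly_int" where
  "var i = Poly_Mapping.single (Poly_Mapping.single i 1) 1"

definition lam :: "nat \<Rightarrow> nat \<Rightarrow> mpoly_int" where
  "lam k i = (\<Sum>m=i..k-1. var m)"

definition Vpoly :: "nat \<Rightarrow> mpoly_int" where
  "Vpoly k = (\<Prod>(i,j)\<in>{(i,j). 1 \<le> i \<and> i < j \<and> j \<le> k}. lam k j - lam k i)"

definition bmono :: "nat \<Rightarrow> (nat \<Rightarrow> nat) \<Rightarrow> (nat \<Rightarrow>\<^sub>0 nat)" where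
  "bmono k b = (\<Sum>i=1..k-1. Poly_Mapping.single i (b i))"

end

theory Submission
  imports Defs "HOL-Library.FuncSet"
begin

text \<open>Since lambda_j - lambda_i = -(v_i + ... + v_(j-1)), up to sign V is the product of
  v_j + ... + v_l over all intervals 1 <= j <= l <= k - 1, i.e. over the upper vertices of B_b.
  Expanding, every term has coefficient +1, so the coefficient of v^b is non-zero iff one can pick
  a point of each interval so that every i is picked exactly b_i times. A perfect matching yields
  such a labelling by forgetting the copy index. A labelling yields (iii), since the
  (t-s+2 choose 2) intervals inside [s, t] are all labelled in [s, t]. Finally (iii) implies
  Hall's condition: the neighbourhood of a set J of intervals consists of the copies of the points
  of their union P, and applying (iii) to each maximal run of P bounds the number of intervals
  inside P by the sum of the b_i over P.\<close>

section \<open>Hall's marriage theorem\<close>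

lemma hall_condition_Diff_critical:
  assumes fin: "finite I" "\<forall>i\<in>I. finite (A i)"
    and hall: "\<forall>K\<subseteq>I. card K \<le> card (\<Union>(A ` K))"
    and J: "J \<subseteq> I" "card (\<Union>(A ` J)) = card J"
  shows "\<forall>K\<subseteq>I - J. card K \<le> card (\<Union>i\<in>K. A i - \<Union>(A ` J))"
proof (intro allI impI)
  fix K assume K: "K \<subseteq> I - J"
  have "finite K" "finite J" using K J(1) fin(1) finite_subset by blast+
  have "card K + card J = card (K \<union> J)"
    using K \<open>finite K\<close> \<open>finite J\<close> by (subst card_Un_disjoint) auto
  also have "\<dots> \<le> card (\<Union>(A ` (K \<union> J)))"
    using hall K J(1) by blast
  also have "\<dots> \<le> card ((\<Union>i\<in>K. A i - \<Union>(A ` J)) \<union> \<Union>(A ` J))"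
    using K J(1) fin \<open>finite K\<close> \<open>finite J\<close> by (intro card_mono) auto
  also have "\<dots> \<le> card (\<Union>i\<in>K. A i - \<Union>(A ` J)) + card J"
    using card_Un_le J(2) by metis
  finally show "card K \<le> card (\<Union>i\<in>K. A i - \<Union>(A ` J))" by simp
qed

lemma hall_condition_Diff_point:
  assumes fin: "finite I" "\<forall>i\<in>I. finite (A i)"
    and surplus: "\<forall>K\<subseteq>I. K \<noteq> {} \<longrightarrow> K \<noteq> I \<longrightarrow> card K < card (\<Union>(A ` K))"
    and "i0 \<in> I"
  shows "\<forall>K\<subseteq>I - {i0}. card K \<le> card (\<Union>i\<in>K. A i - {x})"
proof (intro allI impI)
  fix K assume K: "K \<subseteq> I - {i0}"
  show "card K \<le> card (\<Union>i\<in>K. A i - {x})"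
  proof (cases "K = {}")
    case False
    have "finite K" using K fin(1) finite_subset by blast
    have "card K < card (\<Union>(A ` K))" using surplus K False \<open>i0 \<in> I\<close> by blast
    also have "\<dots> \<le> card (insert x (\<Union>i\<in>K. A i - {x}))"
      using K fin \<open>finite K\<close> by (intro card_mono) auto
    also have "\<dots> = Suc (card (\<Union>i\<in>K. A i - {x}))"
      using K fin \<open>finite K\<close> by (intro card_insert_disjoint) auto
    finally show ?thesis by simp
  qed simp
qed

theorem hall_marriage:
  fixes I :: "'i set" and A :: "'i \<Rightarrow> 'x set"
  assumes "finite I" "\<forall>i\<in>I. finite (A i)"
    and "\<forall>J\<subseteq>I. card J \<le> card (\<Union>(A ` J))"
  shows "\<exists>f. inj_on f I \<and> (\<forall>i\<in>I. f i \<in> A i)"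
  using assms
proof (induction "card I" arbitrary: I A rule: less_induct)
  case less
  note fin = less.prems(1,2) and hall = less.prems(3)
  consider (empty) "I = {}"
    | (critical) J where "J \<subseteq> I" "J \<noteq> {}" "J \<noteq> I" "card (\<Union>(A ` J)) = card J"
    | (surplus) "I \<noteq> {}" "\<forall>K\<subseteq>I. K \<noteq> {} \<longrightarrow> K \<noteq> I \<longrightarrow> card K < card (\<Union>(A ` K))"
  proof (cases "I = {}")
    case False
    then show ?thesis
      using that(2,3) hall by (metis le_neq_implies_less)
  qed (use that in blast)
  then show ?case
  proof cases
    case empty
    then show ?thesis by auto
  next
    case critical
    \<comment> \<open>A critical family: match it inside its own neighbourhood, the rest outside it.\<close>
    define X where "X = \<Union>(A ` J)"
    have "finite J" using critical(1) fin(1) finite_subset by blast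
    have "card J < card I"
      using critical(1,3) fin(1) by (meson psubsetI psubset_card_mono)
    have "card (I - J) < card I"
      using critical(1,2) fin(1) \<open>finite J\<close>
      by (metis Diff_disjoint Diff_partition card_Un_disjoint card_gt_0_iff finite_Diff less_add_same_cancel2)
    obtain f1 where f1: "inj_on f1 J" "\<forall>i\<in>J. f1 i \<in> A i"
      using less.hyps[of J A] \<open>card J < card I\<close> \<open>finite J\<close> fin(2) hall critical(1) by blast
    obtain f2 where f2: "inj_on f2 (I - J)" "\<forall>i\<in>I - J. f2 i \<in> A i - X"
      using less.hyps[of "I - J" "\<lambda>i. A i - X"] \<open>card (I - J) < card I\<close> fin
        hall_condition_Diff_critical[OF fin hall critical(1,4)] unfolding X_def by blast
    define f where "f i = (if i \<in> J then f1 i else f2 i)" for i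
    have "f ` J \<subseteq> X" "f ` (I - J) \<inter> X = {}"
      using f1(2) f2(2) by (auto simp: f_def X_def)
    then have "inj_on f (J \<union> (I - J))"
      using f1(1) f2(1) unfolding inj_on_Un by (auto simp: f_def inj_on_def)
    moreover have "\<forall>i\<in>I. f i \<in> A i" using f1(2) f2(2) by (auto simp: f_def)
    ultimately show ?thesis using critical(1) by (metis Un_Diff_cancel sup.absorb_iff2)
  next
    case surplus
    \<comment> \<open>Every proper family has surplus, so any choice for one index leaves Hall's condition intact.\<close>
    obtain i0 where "i0 \<in> I" using surplus(1) by blast
    with hall have "card {i0} \<le> card (\<Union>(A ` {i0}))" by blast
    then have "A i0 \<noteq> {}" by auto
    then obtain x where "x \<in> A i0" by blast
    obtain f where f: "inj_on f (I - {i0})" "\<forall>i\<in>I - {i0}. f i \<in> A i - {x}"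
      using less.hyps[of "I - {i0}" "\<lambda>i. A i - {x}"] fin card_Diff1_less[OF fin(1) \<open>i0 \<in> I\<close>]
        hall_condition_Diff_point[OF fin surplus(2) \<open>i0 \<in> I\<close>] by blast
    have "inj_on (f(i0 := x)) I" "\<forall>i\<in>I. (f(i0 := x)) i \<in> A i"
      using f \<open>x \<in> A i0\<close> by (auto simp: inj_on_def)
    then show ?thesis by blast
  qed
qed

section \<open>Counting intervals\<close>

definition interval_pairs :: "nat \<Rightarrow> nat \<Rightarrow> (nat \<times> nat) set" where
  "interval_pairs s t = {(j, l). s \<le> j \<and> j \<le> l \<and> l \<le> t}"

definition intervals_within :: "nat set \<Rightarrow> (nat \<times> nat) set" where
  "intervals_within P = {(j, l). j \<le> l \<and> {j..l} \<subseteq> P}"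

lemma finite_interval_pairs [simp]: "finite (interval_pairs s t)"
  unfolding interval_pairs_def by (rule finite_subset[of _ "{s..t} \<times> {s..t}"]) auto

lemma finite_intervals_within: "finite P \<Longrightarrow> finite (intervals_within P)"
  unfolding intervals_within_def by (rule finite_subset[of _ "P \<times> P"]) auto

lemma interval_pairs_Suc:
  "interval_pairs s (Suc t) = interval_pairs s t \<union> (\<lambda>j. (j, Suc t)) ` {s..Suc t}"
  unfolding interval_pairs_def by auto

lemma card_interval_pairs: "card (interval_pairs s t) = (t + 2 - s) choose 2"
proof (induction t)
  case 0
  have "interval_pairs s 0 = (if s = 0 then {(0, 0)} else {})"
    by (auto simp: interval_pairs_def)
  then show ?case by (simp add: numeral_2_eq_2 binomial_eq_0)
next
  case (Suc t)
  have "card (interval_pairs s (Suc t)) = card (interval_pairs s t) + (Suc t + 1 - s)"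
    unfolding interval_pairs_Suc
    by (subst card_Un_disjoint) (auto simp: interval_pairs_def card_image inj_on_def
        finite_interval_pairs[of s t, unfolded interval_pairs_def])
  also have "\<dots> = (Suc t + 2 - s) choose 2"
    using Suc.IH by (cases "s \<le> Suc t") (simp_all add: Suc_diff_le numeral_2_eq_2 binomial_eq_0)
  finally show ?case .
qed

lemma intervals_within_top_run:
  assumes "{s..t} \<subseteq> P" "0 < s" "s - 1 \<notin> P" "\<forall>x\<in>P. x \<le> t"
  shows "intervals_within P \<subseteq> intervals_within (P - {s..t}) \<union> interval_pairs s t"
proof
  fix u assume "u \<in> intervals_within P"
  then obtain j l where u: "u = (j, l)" "j \<le> l" "{j..l} \<subseteq> P"
    by (auto simp: intervals_within_def)
  have "l \<le> t" using u assms(4) by auto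
  show "u \<in> intervals_within (P - {s..t}) \<union> interval_pairs s t"
  proof (cases "l < s")
    case True
    then show ?thesis using u by (auto simp: intervals_within_def)
  next
    case False
    have "s \<le> j"
    proof (rule ccontr)
      assume "\<not> s \<le> j"
      then have "s - 1 \<in> {j..l}" using False by auto
      then show False using u(3) assms(3) by blast
    qed
    then show ?thesis using u \<open>l \<le> t\<close> by (auto simp: interval_pairs_def)
  qed
qed

lemma card_intervals_within_le_sum:
  fixes b :: "nat \<Rightarrow> nat"
  assumes bound: "\<forall>s t. 1 \<le> s \<and> s \<le> t \<and> t \<le> n \<longrightarrow> (\<Sum>j=s..t. b j) \<ge> (t - s + 2) choose 2"
  shows "P \<subseteq> {1..n} \<Longrightarrow> card (intervals_within P) \<le> (\<Sum>i\<in>P. b i)"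
proof (induction "card P" arbitrary: P rule: less_induct)
  case less
  show ?case
  proof (cases "P = {}")
    case True
    then show ?thesis by (simp add: intervals_within_def)
  next
    case False
    have "finite P" using less.prems finite_subset by blast
    \<comment> \<open>Peel off the topmost maximal run \<open>{s..t}\<close> of \<open>P\<close>.\<close>
    define t where "t = Max P"
    define s where "s = (LEAST s. {s..t} \<subseteq> P)"
    have "t \<in> P" "\<forall>x\<in>P. x \<le> t" using \<open>finite P\<close> False by (simp_all add: t_def)
    have "{t..t} \<subseteq> P" using \<open>t \<in> P\<close> by simp
    then have run: "{s..t} \<subseteq> P" "s \<le> t"
      unfolding s_def by (rule LeastI, rule Least_le)
    have "s \<in> P" using run by auto
    then have "1 \<le> s" "t \<le> n" using \<open>t \<in> P\<close> less.prems by auto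
    have "s - 1 \<notin> P"
    proof
      assume "s - 1 \<in> P"
      moreover have "{s - 1..t} \<subseteq> insert (s - 1) {s..t}" by auto
      ultimately have "{s - 1..t} \<subseteq> P" using run by blast
      then have "s \<le> s - 1" unfolding s_def by (rule Least_le)
      then show False using \<open>1 \<le> s\<close> by simp
    qed
    have "card (P - {s..t}) < card P"
      using \<open>t \<in> P\<close> run(2) \<open>finite P\<close> by (intro psubset_card_mono) auto
    then have IH: "card (intervals_within (P - {s..t})) \<le> (\<Sum>i\<in>P - {s..t}. b i)"
      using less.hyps less.prems by blast
    have "card (intervals_within P) \<le> card (intervals_within (P - {s..t}) \<union> interval_pairs s t)"
      using intervals_within_top_run[OF run(1) _ \<open>s - 1 \<notin> P\<close> \<open>\<forall>x\<in>P. x \<le> t\<close>] \<open>1 \<le> s\<close> \<open>finite P\<close>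
      by (intro card_mono) (auto intro: finite_intervals_within)
    also have "\<dots> \<le> card (intervals_within (P - {s..t})) + card (interval_pairs s t)"
      by (rule card_Un_le)
    also have "\<dots> \<le> (\<Sum>i\<in>P - {s..t}. b i) + (\<Sum>i=s..t. b i)"
    proof -
      have "card (interval_pairs s t) = (t - s + 2) choose 2"
        using run(2) by (simp add: card_interval_pairs Suc_diff_le)
      also have "\<dots> \<le> (\<Sum>i=s..t. b i)"
        using bound \<open>1 \<le> s\<close> run(2) \<open>t \<le> n\<close> by blast
      finally show ?thesis using IH by linarith
    qed
    also have "\<dots> = (\<Sum>i\<in>P. b i)"
      using sum.subset_diff[OF run(1) \<open>finite P\<close>, of b] by simp
    finally show ?thesis .
  qed
qed

lemma upperV_eq_interval_pairs: "upperV k = interval_pairs 1 (k - 1)"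
  by (auto simp: upperV_def interval_pairs_def)

lemma finite_upperV [simp]: "finite (upperV k)"
  by (simp add: upperV_eq_interval_pairs)

lemma card_upperV: "card (upperV k) = k choose 2"
  by (cases k) (simp_all add: upperV_eq_interval_pairs card_interval_pairs numeral_2_eq_2)

lemma lowerV_eq_Sigma: "lowerV k b = Sigma {1..k - 1} (\<lambda>i. {1..b i})"
  by (auto simp: lowerV_def)

lemma finite_lowerV [simp]: "finite (lowerV k b)"
  by (simp add: lowerV_eq_Sigma)

lemma card_lowerV: "card (lowerV k b) = bsize k b"
  by (simp add: lowerV_eq_Sigma bsize_def)

lemma matching_sequence_imp_bij:
  assumes "bsize k b = k choose 2" and "matching_sequence k b"
  obtains h where "bij_betw h (upperV k) (lowerV k b)" "\<forall>u\<in>upperV k. (u, h u) \<in> edgesB k b"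
proof -
  obtain M where M: "is_matchingB k b M" "\<forall>d\<in>lowerV k b. \<exists>u. (u, d) \<in> M"
    using assms(2) unfolding matching_sequence_def by blast
  define g where "g d = (SOME u. (u, d) \<in> M)" for d
  have gM: "(g d, d) \<in> M" if "d \<in> lowerV k b" for d
    using M(2) that unfolding g_def by (meson someI_ex)
  have edges: "M \<subseteq> edgesB k b" using M(1) by (simp add: is_matchingB_def)
  have "inj_on g (lowerV k b)"
  proof (rule inj_onI)
    fix d d' assume "d \<in> lowerV k b" "d' \<in> lowerV k b" "g d = g d'"
    then show "d = d'"
      using M(1) gM[of d] gM[of d'] unfolding is_matchingB_def by (metis fst_conv snd_conv)
  qed
  moreover have "g ` lowerV k b \<subseteq> upperV k"
    using gM edges unfolding edgesB_def by fastforce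
  ultimately have "bij_betw g (lowerV k b) (upperV k)"
    using assms(1) by (simp add: bij_betw_def card_subset_eq card_image card_upperV card_lowerV)
  then have "bij_betw (inv_into (lowerV k b) g) (upperV k) (lowerV k b)"
    by (rule bij_betw_inv_into)
  moreover have "(u, inv_into (lowerV k b) g u) \<in> edgesB k b" if "u \<in> upperV k" for u
  proof -
    have "u \<in> g ` lowerV k b" using that \<open>bij_betw g (lowerV k b) (upperV k)\<close>
      by (simp add: bij_betw_def)
    then show ?thesis using gM[OF inv_into_into] edges by (metis f_inv_into_f subsetD)
  qed
  ultimately show ?thesis using that by blast
qed

lemma bij_imp_matching_sequence:
  assumes "bij_betw h (upperV k) (lowerV k b)" "\<forall>u\<in>upperV k. (u, h u) \<in> edgesB k b"
  shows "matching_sequence k b"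
proof -
  define M where "M = (\<lambda>u. (u, h u)) ` upperV k"
  have "is_matchingB k b M"
    using assms by (auto simp: is_matchingB_def M_def bij_betw_def inj_on_def)
  moreover have "\<forall>d\<in>lowerV k b. \<exists>u. (u, d) \<in> M"
    using assms(1) unfolding M_def bij_betw_def by blast
  ultimately show ?thesis unfolding matching_sequence_def by blast
qed

section \<open>Interval labellings\<close>

text \<open>These index the terms of the expansion of \<open>V\<close> that produce the monomial \<open>v\<^sup>b\<close>.\<close>

definition interval_labelling :: "nat \<Rightarrow> (nat \<Rightarrow> nat) \<Rightarrow> (nat \<times> nat \<Rightarrow> nat) \<Rightarrow> bool" where
  "interval_labelling k b f \<longleftrightarrow> (\<forall>u\<in>upperV k. f u \<in> {fst u..snd u}) \<and>
     (\<forall>x\<in>{1..k - 1}. card {u\<in>upperV k. f u = x} = b x)"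

lemma bij_imp_interval_labelling:
  assumes h: "bij_betw h (upperV k) (lowerV k b)" "\<forall>u\<in>upperV k. (u, h u) \<in> edgesB k b"
  shows "interval_labelling k b (fst \<circ> h)"
  unfolding interval_labelling_def
proof (intro conjI ballI)
  fix u assume "u \<in> upperV k"
  then show "(fst \<circ> h) u \<in> {fst u..snd u}" using h(2) by (auto simp: edgesB_def)
next
  fix x assume x: "x \<in> {1..k - 1}"
  define S where "S = {u\<in>upperV k. (fst \<circ> h) u = x}"
  have "h ` S = {d\<in>h ` upperV k. fst d = x}"
    unfolding S_def by force
  also have "\<dots> = {d\<in>lowerV k b. fst d = x}"
    using h(1) by (simp add: bij_betw_def)
  also have "\<dots> = {x} \<times> {1..b x}"
    using x by (auto simp: lowerV_def)
  finally have "h ` S = {x} \<times> {1..b x}" .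
  moreover have "inj_on h S"
    using bij_betw_imp_inj_on[OF h(1)] by (rule inj_on_subset) (auto simp: S_def)
  ultimately have "card S = card ({x} \<times> {1..b x})"
    by (metis card_image)
  then show "card {u\<in>upperV k. (fst \<circ> h) u = x} = b x"
    by (simp add: S_def)
qed

lemma interval_labelling_imp_interval_sum_bounds:
  assumes f: "interval_labelling k b f"
  shows "\<forall>s t. 1 \<le> s \<and> s \<le> t \<and> t \<le> k - 1 \<longrightarrow> (\<Sum>j=s..t. b j) \<ge> (t - s + 2) choose 2"
proof (intro allI impI)
  fix s t assume st: "1 \<le> s \<and> s \<le> t \<and> t \<le> k - 1"
  have "interval_pairs s t \<subseteq> (\<Union>x\<in>{s..t}. {u\<in>upperV k. f u = x})"
  proof
    fix u assume "u \<in> interval_pairs s t"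
    then have "u \<in> upperV k" "{fst u..snd u} \<subseteq> {s..t}"
      using st by (auto simp: interval_pairs_def upperV_def)
    moreover from this(1) have "f u \<in> {fst u..snd u}"
      using f by (simp add: interval_labelling_def)
    ultimately show "u \<in> (\<Union>x\<in>{s..t}. {u\<in>upperV k. f u = x})" by blast
  qed
  then have "card (interval_pairs s t) \<le> card (\<Union>x\<in>{s..t}. {u\<in>upperV k. f u = x})"
    by (intro card_mono) auto
  also have "\<dots> \<le> (\<Sum>x=s..t. card {u\<in>upperV k. f u = x})"
    by (rule card_UN_le) simp
  also have "\<dots> = (\<Sum>x=s..t. b x)"
    using f st by (intro sum.cong) (auto simp: interval_labelling_def)
  finally show "(\<Sum>j=s..t. b j) \<ge> (t - s + 2) choose 2"
    using st by (simp add: card_interval_pairs Suc_diff_le)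
qed

lemma hall_condition_upperV:
  assumes bound: "\<forall>s t. 1 \<le> s \<and> s \<le> t \<and> t \<le> k - 1 \<longrightarrow> (\<Sum>j=s..t. b j) \<ge> (t - s + 2) choose 2"
    and J: "J \<subseteq> upperV k"
  shows "card J \<le> card (\<Union>u\<in>J. {d\<in>lowerV k b. fst u \<le> fst d \<and> fst d \<le> snd u})"
proof -
  define P where "P = (\<Union>u\<in>J. {fst u..snd u})"
  have "P \<subseteq> {1..k - 1}" using J by (auto simp: P_def upperV_def)
  have "finite P" using \<open>P \<subseteq> {1..k - 1}\<close> finite_subset by blast
  have "J \<subseteq> intervals_within P"
    using J by (force simp: P_def upperV_def intervals_within_def)
  then have "card J \<le> card (intervals_within P)"
    by (rule card_mono[OF finite_intervals_within[OF \<open>finite P\<close>]])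
  also have "\<dots> \<le> (\<Sum>i\<in>P. b i)"
    by (rule card_intervals_within_le_sum[OF bound \<open>P \<subseteq> {1..k - 1}\<close>])
  also have "\<dots> = card (Sigma P (\<lambda>i. {1..b i}))"
    using \<open>finite P\<close> by simp
  also have "Sigma P (\<lambda>i. {1..b i}) = (\<Union>u\<in>J. {d\<in>lowerV k b. fst u \<le> fst d \<and> fst d \<le> snd u})"
    using J \<open>P \<subseteq> {1..k - 1}\<close> unfolding P_def lowerV_def upperV_def by fastforce
  finally show ?thesis .
qed

lemma interval_sum_bounds_imp_bij:
  assumes "bsize k b = k choose 2"
    and "\<forall>s t. 1 \<le> s \<and> s \<le> t \<and> t \<le> k - 1 \<longrightarrow> (\<Sum>j=s..t. b j) \<ge> (t - s + 2) choose 2"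
  obtains h where "bij_betw h (upperV k) (lowerV k b)" "\<forall>u\<in>upperV k. (u, h u) \<in> edgesB k b"
proof -
  define A where "A u = {d\<in>lowerV k b. fst u \<le> fst d \<and> fst d \<le> snd u}" for u :: "nat \<times> nat"
  obtain h where h: "inj_on h (upperV k)" "\<forall>u\<in>upperV k. h u \<in> A u"
    using hall_marriage[of "upperV k" A] hall_condition_upperV[OF assms(2)] by (auto simp: A_def)
  have "h ` upperV k \<subseteq> lowerV k b" using h(2) by (auto simp: A_def)
  then have "bij_betw h (upperV k) (lowerV k b)"
    using h(1) assms(1) by (simp add: bij_betw_def card_subset_eq card_image card_upperV card_lowerV)
  moreover have "\<forall>u\<in>upperV k. (u, h u) \<in> edgesB k b"
    using h(2) by (auto simp: A_def edgesB_def)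
  ultimately show ?thesis using that by blast
qed

section \<open>The coefficient of \<open>v\<^sup>b\<close> in \<open>V\<close>\<close>

definition var_sum :: "nat \<times> nat \<Rightarrow> mpoly_int" where
  "var_sum u = (\<Sum>m\<in>{fst u..snd u}. var m)"

lemma lam_diff:
  assumes "1 \<le> i" "i < j" "j \<le> k"
  shows "lam k j - lam k i = - var_sum (i, j - 1)"
proof -
  have "{i..k - 1} = {i..j - 1} \<union> {j..k - 1}" "{i..j - 1} \<inter> {j..k - 1} = {}"
    using assms by auto
  then have "lam k i = var_sum (i, j - 1) + lam k j"
    unfolding lam_def var_sum_def by (simp add: sum.union_disjoint)
  then show ?thesis by simp
qed

lemma Vpoly_eq_signed_prod:
  "Vpoly k = (-1) ^ card {(i, j). 1 \<le> i \<and> i < j \<and> j \<le> k} * (\<Prod>u\<in>upperV k. var_sum u)"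
proof -
  define Q where "Q = {(i::nat, j). 1 \<le> i \<and> i < j \<and> j \<le> k}"
  define h where "h q = (fst q, snd q - 1)" for q :: "nat \<times> nat"
  have "bij_betw h Q (upperV k)"
  proof (rule bij_betwI')
    show "u \<in> upperV k \<Longrightarrow> \<exists>q\<in>Q. u = h q" for u
      by (rule bexI[of _ "(fst u, snd u + 1)"]) (auto simp: Q_def h_def upperV_def)
  qed (auto simp: Q_def h_def upperV_def)
  have "Vpoly k = (\<Prod>q\<in>Q. - var_sum (h q))"
    unfolding Vpoly_def Q_def by (rule prod.cong) (auto simp: lam_diff h_def)
  also have "\<dots> = (-1) ^ card Q * (\<Prod>q\<in>Q. var_sum (h q))"
    by (rule prod_uminus)
  also have "(\<Prod>q\<in>Q. var_sum (h q)) = (\<Prod>u\<in>upperV k. var_sum u)"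
    using prod.reindex_bij_betw[OF \<open>bij_betw h Q (upperV k)\<close>] .
  finally show ?thesis unfolding Q_def .
qed

lemma prod_var_eq_single:
  "finite A \<Longrightarrow> (\<Prod>u\<in>A. var (f u)) = Poly_Mapping.single (\<Sum>u\<in>A. Poly_Mapping.single (f u) 1) 1"
  by (induction A rule: finite_induct) (simp_all add: var_def mult_single)

lemma lookup_sum_single_ne_zero_iff:
  assumes "finite F"
  shows "Poly_Mapping.lookup (\<Sum>g\<in>F. Poly_Mapping.single (\<phi> g) (1::int)) m \<noteq> 0 \<longleftrightarrow> (\<exists>g\<in>F. \<phi> g = m)"
proof -
  have "Poly_Mapping.lookup (\<Sum>g\<in>F. Poly_Mapping.single (\<phi> g) (1::int)) m = (\<Sum>g\<in>F. if \<phi> g = m then 1 else 0)"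
    by (auto simp: lookup_sum lookup_single when_def intro!: sum.cong)
  then show ?thesis
    using sum_nonneg_eq_0_iff[OF assms, of "\<lambda>g. if \<phi> g = m then 1 else 0 :: int"] by auto
qed

definition label_exponent :: "nat \<Rightarrow> (nat \<times> nat \<Rightarrow> nat) \<Rightarrow> (nat \<Rightarrow>\<^sub>0 nat)" where
  "label_exponent k f = (\<Sum>u\<in>upperV k. Poly_Mapping.single (f u) 1)"

lemma lookup_label_exponent: "Poly_Mapping.lookup (label_exponent k f) x = card {u\<in>upperV k. f u = x}"
proof -
  have "Poly_Mapping.lookup (label_exponent k f) x = (\<Sum>u\<in>upperV k. if f u = x then 1 else 0)"
    by (auto simp: label_exponent_def lookup_sum lookup_single when_def intro!: sum.cong)
  then show ?thesis by (simp add: sum.inter_filter[symmetric])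
qed

lemma lookup_bmono: "Poly_Mapping.lookup (bmono k b) x = (if x \<in> {1..k - 1} then b x else 0)"
  by (simp add: bmono_def lookup_sum lookup_single when_def)

lemma lookup_Vpoly_ne_zero_iff:
  "Poly_Mapping.lookup (Vpoly k) m \<noteq> 0 \<longleftrightarrow>
     (\<exists>f\<in>PiE (upperV k) (\<lambda>u. {fst u..snd u}). label_exponent k f = m)"
proof -
  have "(\<Prod>u\<in>upperV k. var_sum u) =
      (\<Sum>f\<in>PiE (upperV k) (\<lambda>u. {fst u..snd u}). Poly_Mapping.single (label_exponent k f) 1)"
    unfolding var_sum_def label_exponent_def by (simp add: prod_sum_PiE prod_var_eq_single)
  moreover have "Poly_Mapping.lookup ((-1) ^ n * p) m \<noteq> 0 \<longleftrightarrow> Poly_Mapping.lookup p m \<noteq> 0"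
    for n and p :: mpoly_int
    by (cases "even n") simp_all
  ultimately show ?thesis
    unfolding Vpoly_eq_signed_prod by (simp add: lookup_sum_single_ne_zero_iff finite_PiE)
qed

lemma label_exponent_eq_bmono_iff:
  assumes "\<forall>u\<in>upperV k. f u \<in> {fst u..snd u}"
  shows "label_exponent k f = bmono k b \<longleftrightarrow> interval_labelling k b f"
proof -
  have "{u\<in>upperV k. f u = x} = {}" if "x \<notin> {1..k - 1}" for x
    using assms that by (force simp: upperV_def)
  then have "label_exponent k f = bmono k b \<longleftrightarrow>
      (\<forall>x\<in>{1..k - 1}. card {u\<in>upperV k. f u = x} = b x)"
    by (auto simp: poly_mapping_eq_iff fun_eq_iff lookup_label_exponent lookup_bmono)
  then show ?thesis using assms by (simp add: interval_labelling_def)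
qed

lemma lookup_Vpoly_bmono_ne_zero_iff:
  "Poly_Mapping.lookup (Vpoly k) (bmono k b) \<noteq> 0 \<longleftrightarrow> (\<exists>f. interval_labelling k b f)"
  unfolding lookup_Vpoly_ne_zero_iff
proof
  assume "\<exists>f\<in>PiE (upperV k) (\<lambda>u. {fst u..snd u}). label_exponent k f = bmono k b"
  then obtain f where "f \<in> PiE (upperV k) (\<lambda>u. {fst u..snd u})" "label_exponent k f = bmono k b" by blast
  then show "\<exists>f. interval_labelling k b f"
    using label_exponent_eq_bmono_iff[of k f b] by (auto simp: PiE_iff)
next
  assume "\<exists>f. interval_labelling k b f"
  then obtain f where f: "interval_labelling k b f" ..
  define g where "g = restrict f (upperV k)"
  have "{u\<in>upperV k. g u = x} = {u\<in>upperV k. f u = x}" for x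
    by (auto simp: g_def)
  then have "interval_labelling k b g"
    using f unfolding interval_labelling_def by (simp add: g_def)
  moreover have g: "g \<in> PiE (upperV k) (\<lambda>u. {fst u..snd u})"
    using f by (simp add: g_def interval_labelling_def)
  ultimately have "label_exponent k g = bmono k b"
    using label_exponent_eq_bmono_iff[of k g b] by (simp add: PiE_iff)
  with g show "\<exists>f\<in>PiE (upperV k) (\<lambda>u. {fst u..snd u}). label_exponent k f = bmono k b" by blast
qed

theorem mainTheorem7:
  fixes k :: nat and b :: "nat \<Rightarrow> nat"
  assumes "k \<ge> 2"
    and "bsize k b = k choose 2"
  shows "(perfect_matching_sequence k b \<longleftrightarrow> Poly_Mapping.lookup (Vpoly k) (bmono k b) \<noteq> 0)
       \<and> (Poly_Mapping.lookup (Vpoly k) (bmono k b) \<noteq> 0 \<longleftrightarrow>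
            (\<forall>s t. 1 \<le> s \<and> s \<le> t \<and> t \<le> k-1 \<longrightarrow> (\<Sum>j=s..t. b j) \<ge> (t-s+2) choose 2))"
proof -
  have "perfect_matching_sequence k b \<longleftrightarrow> matching_sequence k b"
    using assms(2) by (simp add: perfect_matching_sequence_def)
  moreover have "matching_sequence k b \<Longrightarrow> \<exists>f. interval_labelling k b f"
    using matching_sequence_imp_bij[OF assms(2)] bij_imp_interval_labelling by metis
  moreover have "interval_labelling k b f \<Longrightarrow>
      \<forall>s t. 1 \<le> s \<and> s \<le> t \<and> t \<le> k-1 \<longrightarrow> (\<Sum>j=s..t. b j) \<ge> (t-s+2) choose 2" for f
    by (rule interval_labelling_imp_interval_sum_bounds)
  moreover have "\<forall>s t. 1 \<le> s \<and> s \<le> t \<and> t \<le> k-1 \<longrightarrow> (\<Sum>j=s..t. b j) \<ge> (t-s+2) choose 2 \<Longrightarrow>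
      matching_sequence k b"
    using interval_sum_bounds_imp_bij[OF assms(2)] bij_imp_matching_sequence by metis
  ultimately show ?thesis
    using lookup_Vpoly_bmono_ne_zero_iff by blast
qed

end
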